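(* The linear space $L^{(d-1)}$ is a relative $W_d(\mathbb C)$-section for the action of $O_d(\mathbb C)$ on $V$. More precisely, there exist rational invariants $f_1,\dots,f_d\in\mathbb C(V)^{O_d(\mathbb C)}$ such that, setting $$U_d(\mathbb C)=\Big\{(v,M)\in V:\ (v,M)\text{ is in the domain of each }f_k\text{ and }\prod_{k=1}^df_k(v,M)\neq0\Big\},$$ which is an invariant non-empty Zariski-open subset of $V$, the space $L^{(d-1)}$ intersects each orbit contained in $U_d(\mathbb C)$. Furthermore: $f_1=c_1^2+\dots+c_d^2$; $f_i|_{L^{(i-1)}}=c_{1(d-i+2)}^2+\dots+c_{(d-i+1)(d-i+2)}^2$ for $2\le i<d$; and $f_d|_{L^{(d-1)}}=c_{12}^2$.
   Context: Fix $d\ge2$. $V=\mathbb C^d\oplus\mathfrak{so}(d,\mathbb C)$ has elements $(v,M)$ with $v=(c_1,\dots,c_d)^\top$ and $M$ complex skew-symmetric with $M_{ij}=c_{ij}=-M_{ji}$ for $i<j$. $O_d(\mathbb C)=\{A\in\mathbb C^{d\times d}:AA^\top=I\}$ acts by $A\cdot(v,M)=(Av,AMA^\top)$. $L^{(1)}=\{(v,M):c_1=\dots=c_{d-1}=0\}$ and for $2\le i\le d-1$, $L^{(i)}=\{(v,M)\in L^{(i-1)}:c_{k(d-i+2)}=0,\ 1\le k\le d-i\}$; so $L^{(d-1)}$ consists of $(v,M)$ with $v=(0,\dots,0,c_d)$ and only $c_{12},c_{23},\dots,c_{(d-1)d}$ possibly nonzero in $M$. $W_d(\mathbb C)\subset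 O_d(\mathbb C)$ is the group of diagonal matrices with diagonal entries in $\{-1,1\}$. For a subgroup $N\subset G$ of a group acting rationally on a variety $X$, a subvariety $S\subset X$ is a relative $N$-section if there is a non-empty, $G$-invariant, Zariski-open $U\subset X$ such that $S$ intersects each orbit contained in $U$, and $N=\{n\in G:nS=S\}$. $\mathbb C(V)^{O_d(\mathbb C)}$ denotes the field of $O_d(\mathbb C)$-invariant rational functions on $V$. *)

theory Defs
  imports Complex_Main
begin

text \<open>Indices are 1-based: a point is a pair (v,M) with
  v :: nat => complex supported on {1..d} (v i = c_i) and M :: nat => nat => complex a
  skew-symmetric matrix supported on {1..d} x {1..d} (M i j = c_ij for i < j).\<close>

type_synonym pt = "(nat \<Rightarrow> complex) \<times> (nat \<Rightarrow> nat \<Rightarrow> complex)"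
type_synonym mat = "nat \<Rightarrow> nat \<Rightarrow> complex"

definition Vsp :: "nat \<Rightarrow> pt set" where
  "Vsp d = {(v, M). (\<forall>i. i \<notin> {1..d} \<longrightarrow> v i = 0)
                  \<and> (\<forall>i j. M i j = - M j i)
                  \<and> (\<forall>i j. i \<notin> {1..d} \<or> j \<notin> {1..d} \<longrightarrow> M i j = 0)}"

definition Od :: "nat \<Rightarrow> mat set" where
  "Od d = {A. (\<forall>i j. i \<notin> {1..d} \<or> j \<notin> {1..d} \<longrightarrow> A i j = 0)
            \<and> (\<forall>i\<in>{1..d}. \<forall>j\<in>{1..d}. (\<Sum>k=1..d. A i k * A j k) = (if i = j then 1 else 0))}"

definition Wd :: "nat \<Rightarrow> mat set" where
  "Wd d = {A. (\<forall>i j. i \<notin> {1..d} \<or> j \<notin> {1..d} \<longrightarrow> A i j = 0)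
            \<and> (\<forall>i j. i \<noteq> j \<longrightarrow> A i j = 0)
            \<and> (\<forall>i\<in>{1..d}. A i i = 1 \<or> A i i = -1)}"

definition act :: "nat \<Rightarrow> mat \<Rightarrow> pt \<Rightarrow> pt" where
  "act d A x = ((\<lambda>i. \<Sum>k=1..d. A i k * fst x k),
                (\<lambda>i j. \<Sum>k=1..d. \<Sum>l=1..d. A i k * snd x k l * A j l))"

definition orbit :: "nat \<Rightarrow> pt \<Rightarrow> pt set" where
  "orbit d x = (\<lambda>A. act d A x) ` Od d"

inductive_set polyfun :: "nat \<Rightarrow> (pt \<Rightarrow> complex) set" for d :: nat where
  pconst: "(\<lambda>x. c) \<in> polyfun d"
| pvec: "i \<in> {1..d} \<Longrightarrow> (\<lambda>x. fst x i) \<in> polyfun d"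
| pmat: "1 \<le> i \<Longrightarrow> i < j \<Longrightarrow> j \<le> d \<Longrightarrow> (\<lambda>x. snd x i j) \<in> polyfun d"
| padd: "p \<in> polyfun d \<Longrightarrow> q \<in> polyfun d \<Longrightarrow> (\<lambda>x. p x + q x) \<in> polyfun d"
| pmult: "p \<in> polyfun d \<Longrightarrow> q \<in> polyfun d \<Longrightarrow> (\<lambda>x. p x * q x) \<in> polyfun d"

definition zariski_open :: "nat \<Rightarrow> pt set \<Rightarrow> bool" where
  "zariski_open d U = (\<exists>S \<subseteq> polyfun d. U = {x \<in> Vsp d. \<exists>p\<in>S. p x \<noteq> 0})"

text \<open>A rational function on V is represented by a fraction (p,q) of polynomial functions with
  q not identically zero on V; (p,q) and (p',q') represent the same element of C(V) iff
  p q' = p' q on V.\<close>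
definition ratfun :: "nat \<Rightarrow> (pt \<Rightarrow> complex) \<times> (pt \<Rightarrow> complex) \<Rightarrow> bool" where
  "ratfun d f = (fst f \<in> polyfun d \<and> snd f \<in> polyfun d \<and> (\<exists>x\<in>Vsp d. snd f x \<noteq> 0))"

definition rat_equiv :: "nat \<Rightarrow> (pt \<Rightarrow> complex) \<times> (pt \<Rightarrow> complex) \<Rightarrow> (pt \<Rightarrow> complex) \<times> (pt \<Rightarrow> complex) \<Rightarrow> bool" where
  "rat_equiv d f g = (ratfun d f \<and> ratfun d g \<and> (\<forall>y\<in>Vsp d. fst f y * snd g y = fst g y * snd f y))"

definition rdom :: "nat \<Rightarrow> (pt \<Rightarrow> complex) \<times> (pt \<Rightarrow> complex) \<Rightarrow> pt set" where
  "rdom d f = {x \<in> Vsp d. \<exists>g. rat_equiv d f g \<and> snd g x \<noteq> 0}"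

definition reval :: "nat \<Rightarrow> (pt \<Rightarrow> complex) \<times> (pt \<Rightarrow> complex) \<Rightarrow> pt \<Rightarrow> complex" where
  "reval d f x = (SOME c. \<exists>g. rat_equiv d f g \<and> snd g x \<noteq> 0 \<and> c = fst g x / snd g x)"

definition rat_invariant :: "nat \<Rightarrow> (pt \<Rightarrow> complex) \<times> (pt \<Rightarrow> complex) \<Rightarrow> bool" where
  "rat_invariant d f = (\<forall>A\<in>Od d. \<forall>x\<in>Vsp d.
      fst f (act d A x) * snd f x = fst f x * snd f (act d A x))"

text \<open>The linear subspaces L^(i); Lset d 0 = V for convenience.\<close>
fun Lset :: "nat \<Rightarrow> nat \<Rightarrow> pt set" where
  "Lset d 0 = Vsp d"
| "Lset d (Suc 0) = {x \<in> Vsp d. \<forall>k\<in>{1..d-1}. fst x k = 0}"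
| "Lset d (Suc (Suc i)) = {x \<in> Lset d (Suc i).
      \<forall>k\<in>{1..d-(i+2)}. snd x k (d + 2 - (i+2)) = 0}"

definition relative_section :: "nat \<Rightarrow> mat set \<Rightarrow> pt set \<Rightarrow> bool" where
  "relative_section d N S =
     ((\<exists>U. U \<subseteq> Vsp d \<and> U \<noteq> {} \<and> zariski_open d U \<and> (\<forall>A\<in>Od d. act d A ` U \<subseteq> U)
          \<and> (\<forall>x\<in>U. orbit d x \<subseteq> U \<longrightarrow> orbit d x \<inter> S \<noteq> {}))
      \<and> N = {A \<in> Od d. act d A ` S = S})"

end

(*
  Run the Lanczos process on the skew matrix M of (v, M), starting from v: with the complex
  bilinear form q(u) = u_1^2 + ... + u_d^2, the vectors p_0 = v, p_1 = M v and
  p_(k+2) = M p_(k+1) + (q(p_(k+1)) / q(p_k)) p_k are O_d-equivariant, so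
  f_1 = q(p_0) and f_k = q(p_(k-1)) / q(p_(k-2)) are rational invariants.

  Where no q(p_j) vanishes, a Householder reflection moves a point of L^(m) into L^(m+1): it
  sends the part of column d - m + 1 above the diagonal to a multiple of e_(d-m) and fixes
  the coordinates that are already normalized. On L^(m) the vector p_m is a multiple of that
  column and p_(m-1) a multiple of e_(d-m+1), which yields the restrictions of f_(m+1); a
  polynomial identity along lines carries them over to every representative of the rational
  function. Finally the stabilizer of L^(d-1) is read off from two families of test points.
*)

theory Submission
  imports Defs "Jordan_Normal_Form.Determinant"
begin

lemma sum_eq_single_term:
  "finite S \<Longrightarrow> a \<in> S \<Longrightarrow> (\<And>l. l \<in> S \<Longrightarrow> l \<noteq> a \<Longrightarrow> f l = 0) \<Longrightarrow> sum f S = f a"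
  by (simp add: sum.remove sum.neutral)

lemma sum_atLeast1_atMost_shift: "(\<Sum>k=1..d. f k) = (\<Sum>k<d. f (Suc k))"
  using sum.atLeast1_atMost_eq[of f d] by (simp add: One_nat_def)

lemma polyfun_neg: "p \<in> polyfun d \<Longrightarrow> (\<lambda>x. - p x) \<in> polyfun d"
  using polyfun.pmult[OF polyfun.pconst[of "-1"], of p] by simp

lemma polyfun_minus: "p \<in> polyfun d \<Longrightarrow> q \<in> polyfun d \<Longrightarrow> (\<lambda>x. p x - q x) \<in> polyfun d"
  using polyfun.padd[OF _ polyfun_neg[of q]] by simp

lemma polyfun_power: "p \<in> polyfun d \<Longrightarrow> (\<lambda>x. p x ^ n) \<in> polyfun d"
  by (induction n) (simp_all add: polyfun.pconst polyfun.pmult)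

lemma polyfun_sum:
  "finite S \<Longrightarrow> (\<And>i. i \<in> S \<Longrightarrow> f i \<in> polyfun d) \<Longrightarrow> (\<lambda>x. \<Sum>i\<in>S. f i x) \<in> polyfun d"
  by (induction S rule: finite_induct) (simp_all add: polyfun.pconst polyfun.padd)

lemma polyfun_prod:
  "finite S \<Longrightarrow> (\<And>i. i \<in> S \<Longrightarrow> f i \<in> polyfun d) \<Longrightarrow> (\<lambda>x. \<Prod>i\<in>S. f i x) \<in> polyfun d"
  by (induction S rule: finite_induct) (simp_all add: polyfun.pconst polyfun.pmult)

lemma Vsp_iff:
  "x \<in> Vsp d \<longleftrightarrow> (\<forall>i. i \<notin> {1..d} \<longrightarrow> fst x i = 0) \<and> (\<forall>i j. snd x i j = - snd x j i)
     \<and> (\<forall>i j. i \<notin> {1..d} \<or> j \<notin> {1..d} \<longrightarrow> snd x i j = 0)"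
  by (cases x) (simp only: Vsp_def mem_Collect_eq case_prod_conv fst_conv snd_conv)

lemma Vsp_vec_zero: "x \<in> Vsp d \<Longrightarrow> i \<notin> {1..d} \<Longrightarrow> fst x i = 0"
  and Vsp_skew: "x \<in> Vsp d \<Longrightarrow> snd x i j = - snd x j i"
  and Vsp_mat_zero: "x \<in> Vsp d \<Longrightarrow> i \<notin> {1..d} \<or> j \<notin> {1..d} \<Longrightarrow> snd x i j = 0"
  unfolding Vsp_iff by blast+

lemma Vsp_diag: "x \<in> Vsp d \<Longrightarrow> snd x i i = 0"
  using Vsp_skew[of x d i i] by simp

text \<open>The entries below the diagonal are not coordinate functions of V; reading them off the
  upper triangle makes everything built from \<open>skew_mat\<close> a polynomial.\<close>

definition skew_mat :: "pt \<Rightarrow> Defs.mat" where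
  "skew_mat x i j = (if i < j then snd x i j else if j < i then - snd x j i else 0)"

lemma skew_mat_Vsp: "x \<in> Vsp d \<Longrightarrow> skew_mat x = snd x"
  by (intro ext) (auto simp: skew_mat_def Vsp_diag intro: Vsp_skew[symmetric])

lemma polyfun_skew_mat: "i \<in> {1..d} \<Longrightarrow> j \<in> {1..d} \<Longrightarrow> (\<lambda>x. skew_mat x i j) \<in> polyfun d"
  unfolding skew_mat_def
  by (cases i j rule: linorder_cases) (auto intro!: polyfun.pmat polyfun_neg polyfun.pconst)

definition mat_vec :: "nat \<Rightarrow> Defs.mat \<Rightarrow> (nat \<Rightarrow> complex) \<Rightarrow> nat \<Rightarrow> complex" where
  "mat_vec d A u i = (\<Sum>k=1..d. A i k * u k)"

definition mat_mul :: "nat \<Rightarrow> Defs.mat \<Rightarrow> Defs.mat \<Rightarrow> Defs.mat" where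
  "mat_mul d B A i j = (\<Sum>k=1..d. B i k * A k j)"

definition qform :: "nat \<Rightarrow> (nat \<Rightarrow> complex) \<Rightarrow> complex" where
  "qform d u = (\<Sum>i=1..d. (u i)\<^sup>2)"

lemma mat_vec_linear:
  "mat_vec d A (\<lambda>l. a * u l + b * w l) i = a * mat_vec d A u i + b * mat_vec d A w i"
  unfolding mat_vec_def by (simp add: sum.distrib sum_distrib_left mult_ac distrib_left)

lemma polyfun_mat_vec:
  "(\<And>l. l \<in> {1..d} \<Longrightarrow> (\<lambda>x. A x i l) \<in> polyfun d) \<Longrightarrow> (\<And>l. l \<in> {1..d} \<Longrightarrow> (\<lambda>x. u x l) \<in> polyfun d)
   \<Longrightarrow> (\<lambda>x. mat_vec d (A x) (u x) i) \<in> polyfun d"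
  unfolding mat_vec_def by (auto intro!: polyfun_sum polyfun.pmult)

lemma polyfun_qform:
  "(\<And>l. l \<in> {1..d} \<Longrightarrow> (\<lambda>x. u x l) \<in> polyfun d) \<Longrightarrow> (\<lambda>x. qform d (u x)) \<in> polyfun d"
  unfolding qform_def by (auto intro!: polyfun_sum polyfun_power)

lemma Od_rows: "A \<in> Od d \<Longrightarrow> i \<in> {1..d} \<Longrightarrow> j \<in> {1..d} \<Longrightarrow>
    (\<Sum>k=1..d. A i k * A j k) = (if i = j then 1 else 0)"
  and Od_zero: "A \<in> Od d \<Longrightarrow> i \<notin> {1..d} \<or> j \<notin> {1..d} \<Longrightarrow> A i j = 0"
  unfolding Od_def by blast+

lemma Od_cols:
  assumes A: "A \<in> Od d" and i: "i \<in> {1..d}" and j: "j \<in> {1..d}"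
  shows "(\<Sum>k=1..d. A k i * A k j) = (if i = j then 1 else 0)"
proof -
  define T where "T = Matrix.mat d d (\<lambda>(i, j). A (Suc i) (Suc j))"
  have c: "T \<in> carrier_mat d d" "transpose_mat T \<in> carrier_mat d d" by (auto simp: T_def)
  have "T * transpose_mat T = 1\<^sub>m d"
  proof (rule eq_matI)
    fix i j assume "i < dim_row (1\<^sub>m d)" "j < dim_col (1\<^sub>m d)"
    then have ij: "i < d" "j < d" by simp_all
    have "(T * transpose_mat T) $$ (i, j) = (\<Sum>k<d. A (Suc i) (Suc k) * A (Suc j) (Suc k))"
      using ij by (simp add: T_def scalar_prod_def lessThan_atLeast0)
    also have "\<dots> = (\<Sum>k=1..d. A (Suc i) k * A (Suc j) k)" by (simp only: sum_atLeast1_atMost_shift)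
    also have "\<dots> = (if i = j then 1 else 0)" using Od_rows[OF A, of "Suc i" "Suc j"] ij by simp
    finally show "(T * transpose_mat T) $$ (i, j) = 1\<^sub>m d $$ (i, j)" using ij by simp
  qed (auto simp: T_def)
  then have TT: "transpose_mat T * T = 1\<^sub>m d" by (rule mat_mult_left_right_inverse[OF c])
  have ij: "i - 1 < d" "j - 1 < d" using i j by auto
  have "(transpose_mat T * T) $$ (i - 1, j - 1) = (\<Sum>k<d. A (Suc k) i * A (Suc k) j)"
    using i j ij by (simp add: T_def scalar_prod_def lessThan_atLeast0)
  also have "\<dots> = (\<Sum>k=1..d. A k i * A k j)" by (simp only: sum_atLeast1_atMost_shift)
  finally have "(\<Sum>k=1..d. A k i * A k j) = 1\<^sub>m d $$ (i - 1, j - 1)" unfolding TT by simp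
  moreover have "(i - 1 = j - 1) = (i = j)" using i j by auto
  ultimately show ?thesis using ij by simp
qed

lemma Od_cols_contract:
  assumes A: "A \<in> Od d" and p: "p \<in> {1..d}"
  shows "(\<Sum>l=1..d. A l p * mat_vec d A u l) = u p"
proof -
  have "(\<Sum>l=1..d. A l p * mat_vec d A u l) = (\<Sum>l=1..d. \<Sum>q=1..d. A l p * A l q * u q)"
    by (simp add: mat_vec_def sum_distrib_left mult.assoc)
  also have "\<dots> = (\<Sum>q=1..d. \<Sum>l=1..d. A l p * A l q * u q)" by (rule sum.swap)
  also have "\<dots> = (\<Sum>q=1..d. (\<Sum>l=1..d. A l p * A l q) * u q)" by (simp add: sum_distrib_right)
  also have "\<dots> = (\<Sum>q=1..d. if p = q then u q else 0)"
  proof (rule sum.cong[OF refl])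
    fix q assume "q \<in> {1..d}"
    then show "(\<Sum>l=1..d. A l p * A l q) * u q = (if p = q then u q else 0)"
      using Od_cols[OF A p, of q] by simp
  qed
  finally show ?thesis using p by simp
qed

lemma qform_mat_vec_Od: assumes A: "A \<in> Od d" shows "qform d (mat_vec d A u) = qform d u"
proof -
  have "qform d (mat_vec d A u) = (\<Sum>i=1..d. (\<Sum>k=1..d. A i k * u k) * mat_vec d A u i)"
    unfolding qform_def by (simp add: power2_eq_square mat_vec_def)
  also have "\<dots> = (\<Sum>i=1..d. \<Sum>k=1..d. u k * (A i k * mat_vec d A u i))"
    by (simp add: sum_distrib_right sum_distrib_left mult_ac)
  also have "\<dots> = (\<Sum>k=1..d. \<Sum>i=1..d. u k * (A i k * mat_vec d A u i))" by (rule sum.swap)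
  also have "\<dots> = (\<Sum>k=1..d. u k * u k)"
    by (rule sum.cong[OF refl]) (use Od_cols_contract[OF A] in \<open>simp add: sum_distrib_left[symmetric]\<close>)
  finally show ?thesis by (simp add: qform_def power2_eq_square)
qed

lemma mat_mul_Od: assumes A: "A \<in> Od d" and B: "B \<in> Od d" shows "mat_mul d B A \<in> Od d"
proof -
  have "(\<Sum>k=1..d. mat_mul d B A i k * mat_mul d B A j k) = (if i = j then 1 else 0)"
    if i: "i \<in> {1..d}" and j: "j \<in> {1..d}" for i j
  proof -
    have "(\<Sum>k=1..d. mat_mul d B A i k * mat_mul d B A j k)
        = (\<Sum>k=1..d. \<Sum>q=1..d. \<Sum>p=1..d. B i p * B j q * (A p k * A q k))"
      by (simp add: mat_mul_def sum_distrib_left sum_distrib_right mult_ac)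
    also have "\<dots> = (\<Sum>k=1..d. \<Sum>p=1..d. \<Sum>q=1..d. B i p * B j q * (A p k * A q k))"
      by (rule sum.cong[OF refl], rule sum.swap)
    also have "\<dots> = (\<Sum>p=1..d. \<Sum>k=1..d. \<Sum>q=1..d. B i p * B j q * (A p k * A q k))"
      by (rule sum.swap)
    also have "\<dots> = (\<Sum>p=1..d. \<Sum>q=1..d. \<Sum>k=1..d. B i p * B j q * (A p k * A q k))"
      by (rule sum.cong[OF refl], rule sum.swap)
    also have "\<dots> = (\<Sum>p=1..d. \<Sum>q=1..d. if p = q then B i p * B j q else 0)"
    proof (intro sum.cong refl)
      fix p q assume "p \<in> {1..d}" "q \<in> {1..d}"
      then show "(\<Sum>k=1..d. B i p * B j q * (A p k * A q k)) = (if p = q then B i p * B j q else 0)"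
        using Od_rows[OF A, of p q] by (simp add: sum_distrib_left[symmetric])
    qed
    also have "\<dots> = (\<Sum>p=1..d. B i p * B j p)" by (simp add: sum.delta)
    also have "\<dots> = (if i = j then 1 else 0)" by (rule Od_rows[OF B i j])
    finally show ?thesis .
  qed
  moreover have "\<forall>i j. i \<notin> {1..d} \<or> j \<notin> {1..d} \<longrightarrow> mat_mul d B A i j = 0"
    by (auto simp: mat_mul_def Od_zero[OF A] Od_zero[OF B])
  ultimately show ?thesis unfolding Od_def by blast
qed

lemma act_fst: "fst (act d A x) = mat_vec d A (fst x)"
  by (simp add: act_def mat_vec_def fun_eq_iff)

lemma act_snd: "snd (act d A x) i j = (\<Sum>k=1..d. \<Sum>l=1..d. A i k * snd x k l * A j l)"
  by (simp add: act_def)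

lemma act_Vsp: assumes A: "A \<in> Od d" and x: "x \<in> Vsp d" shows "act d A x \<in> Vsp d"
proof -
  have "snd (act d A x) j i = - snd (act d A x) i j" for i j
  proof -
    have "snd (act d A x) j i = (\<Sum>l=1..d. \<Sum>k=1..d. A j k * snd x k l * A i l)"
      unfolding act_snd by (rule sum.swap)
    also have "\<dots> = (\<Sum>l=1..d. \<Sum>k=1..d. - (A i l * snd x l k * A j k))"
    proof (intro sum.cong refl)
      fix l k
      show "A j k * snd x k l * A i l = - (A i l * snd x l k * A j k)"
        using Vsp_skew[OF x, of k l] by simp
    qed
    finally show ?thesis by (simp add: act_snd sum_negf)
  qed
  moreover have "\<forall>i. i \<notin> {1..d} \<longrightarrow> fst (act d A x) i = 0"
    by (auto simp: act_fst mat_vec_def Od_zero[OF A])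
  moreover have "\<forall>i j. i \<notin> {1..d} \<or> j \<notin> {1..d} \<longrightarrow> snd (act d A x) i j = 0"
    by (auto simp: act_snd Od_zero[OF A])
  ultimately show ?thesis unfolding Vsp_iff by metis
qed

lemma act_mat_mul: "act d B (act d A x) = act d (mat_mul d B A) x"
proof -
  have "fst (act d B (act d A x)) i = fst (act d (mat_mul d B A) x) i" for i
  proof -
    have "fst (act d B (act d A x)) i = (\<Sum>k=1..d. \<Sum>l=1..d. B i k * A k l * fst x l)"
      by (simp add: act_fst mat_vec_def sum_distrib_left mult_ac)
    also have "\<dots> = fst (act d (mat_mul d B A) x) i"
      by (subst sum.swap) (simp add: act_fst mat_vec_def mat_mul_def sum_distrib_right)
    finally show ?thesis .
  qed
  moreover have "snd (act d B (act d A x)) i j = snd (act d (mat_mul d B A) x) i j" for i j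
  proof -
    let ?f = "\<lambda>k l p q. B i k * A k p * snd x p q * A l q * B j l"
    have "snd (act d B (act d A x)) i j = (\<Sum>k=1..d. \<Sum>l=1..d. \<Sum>p=1..d. \<Sum>q=1..d. ?f k l p q)"
      by (simp add: act_snd sum_distrib_left sum_distrib_right mult_ac)
    also have "\<dots> = (\<Sum>k=1..d. \<Sum>p=1..d. \<Sum>l=1..d. \<Sum>q=1..d. ?f k l p q)"
      by (rule sum.cong[OF refl], rule sum.swap)
    also have "\<dots> = (\<Sum>k=1..d. \<Sum>p=1..d. \<Sum>q=1..d. \<Sum>l=1..d. ?f k l p q)"
      by (rule sum.cong[OF refl], rule sum.cong[OF refl], rule sum.swap)
    also have "\<dots> = (\<Sum>p=1..d. \<Sum>q=1..d. \<Sum>k=1..d. \<Sum>l=1..d. ?f k l p q)"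
      by (subst sum.swap) (rule sum.cong[OF refl], rule sum.swap)
    also have "\<dots> = snd (act d (mat_mul d B A) x) i j"
      by (simp add: act_snd mat_mul_def sum_distrib_left sum_distrib_right mult_ac)
    finally show ?thesis .
  qed
  ultimately show ?thesis by (simp add: prod_eq_iff fun_eq_iff)
qed

lemma skew_mat_act:
  assumes A: "A \<in> Od d" and x: "x \<in> Vsp d"
  shows "mat_vec d (skew_mat (act d A x)) (mat_vec d A u) = mat_vec d A (mat_vec d (skew_mat x) u)"
proof
  fix i
  have "mat_vec d (skew_mat (act d A x)) (mat_vec d A u) i
      = (\<Sum>l=1..d. \<Sum>k=1..d. \<Sum>p=1..d. A i k * snd x k p * (A l p * mat_vec d A u l))"
    by (simp add: skew_mat_Vsp[OF act_Vsp[OF A x]] mat_vec_def[of d "snd (act d A x)"] act_snd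
        sum_distrib_right mult.assoc)
  also have "\<dots> = (\<Sum>k=1..d. \<Sum>p=1..d. \<Sum>l=1..d. A i k * snd x k p * (A l p * mat_vec d A u l))"
    by (subst sum.swap) (rule sum.cong[OF refl], rule sum.swap)
  also have "\<dots> = (\<Sum>k=1..d. \<Sum>p=1..d. A i k * snd x k p * u p)"
    by (intro sum.cong refl) (use Od_cols_contract[OF A] in \<open>simp add: sum_distrib_left[symmetric]\<close>)
  also have "\<dots> = mat_vec d A (mat_vec d (skew_mat x) u) i"
    unfolding mat_vec_def skew_mat_Vsp[OF x] by (simp add: sum_distrib_left mult.assoc)
  finally show "mat_vec d (skew_mat (act d A x)) (mat_vec d A u) i
    = mat_vec d A (mat_vec d (skew_mat x) u) i" .
qed

text \<open>p_k = lanczos_vec d k x / lanczos_den d k x are the Lanczos vectors;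
  clearing the denominators keeps everything polynomial.\<close>

fun lanczos_vec :: "nat \<Rightarrow> nat \<Rightarrow> pt \<Rightarrow> nat \<Rightarrow> complex"
and lanczos_den :: "nat \<Rightarrow> nat \<Rightarrow> pt \<Rightarrow> complex" where
  "lanczos_vec d 0 x = fst x"
| "lanczos_vec d (Suc 0) x = mat_vec d (skew_mat x) (fst x)"
| "lanczos_vec d (Suc (Suc k)) x =
     (\<lambda>i. lanczos_den d (Suc k) x * qform d (lanczos_vec d k x)
            * mat_vec d (skew_mat x) (lanczos_vec d (Suc k) x) i
          + qform d (lanczos_vec d (Suc k) x) * lanczos_den d k x * lanczos_vec d k x i)"
| "lanczos_den d 0 x = 1"
| "lanczos_den d (Suc 0) x = 1"
| "lanczos_den d (Suc (Suc k)) x = (lanczos_den d (Suc k) x)\<^sup>2 * qform d (lanczos_vec d k x)"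

lemma polyfun_lanczos:
  "(\<forall>i\<in>{1..d}. (\<lambda>x. lanczos_vec d k x i) \<in> polyfun d) \<and> (\<lambda>x. lanczos_den d k x) \<in> polyfun d"
proof (induction k rule: induct_nat_012)
  case 0
  show ?case by (simp add: polyfun.pvec polyfun.pconst)
next
  case 1
  show ?case by (auto intro!: polyfun_mat_vec polyfun_skew_mat polyfun.pvec polyfun.pconst)
next
  case (ge2 k)
  then show ?case
    by (auto intro!: polyfun.padd polyfun.pmult polyfun_power polyfun_qform polyfun_mat_vec
        polyfun_skew_mat)
qed

lemma polyfun_lanczos_den: "(\<lambda>x. lanczos_den d k x) \<in> polyfun d"
  and polyfun_qform_lanczos_vec: "(\<lambda>x. qform d (lanczos_vec d k x)) \<in> polyfun d"
  using polyfun_lanczos[of d k] by (auto intro: polyfun_qform)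

lemma lanczos_act:
  assumes A: "A \<in> Od d" and x: "x \<in> Vsp d"
  shows "lanczos_vec d k (act d A x) = mat_vec d A (lanczos_vec d k x)
    \<and> lanczos_den d k (act d A x) = lanczos_den d k x"
proof (induction k rule: induct_nat_012)
  case 0
  show ?case by (simp add: act_fst)
next
  case 1
  show ?case by (simp add: act_fst skew_mat_act[OF A x])
next
  case (ge2 k)
  have "lanczos_vec d (Suc (Suc k)) (act d A x) i = mat_vec d A (lanczos_vec d (Suc (Suc k)) x) i" for i
  proof -
    have "lanczos_vec d (Suc (Suc k)) (act d A x) i
        = (lanczos_den d (Suc k) x * qform d (lanczos_vec d k x))
            * mat_vec d A (mat_vec d (skew_mat x) (lanczos_vec d (Suc k) x)) i
          + (qform d (lanczos_vec d (Suc k) x) * lanczos_den d k x) * mat_vec d A (lanczos_vec d k x) i"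
      using ge2 by (simp add: qform_mat_vec_Od[OF A] skew_mat_act[OF A x])
    also have "\<dots> = mat_vec d A (lanczos_vec d (Suc (Suc k)) x) i"
      by (simp only: lanczos_vec.simps mat_vec_linear)
    finally show ?thesis .
  qed
  moreover have "lanczos_den d (Suc (Suc k)) (act d A x) = lanczos_den d (Suc (Suc k)) x"
    using ge2 by (simp add: qform_mat_vec_Od[OF A])
  ultimately show ?case by blast
qed

lemma lanczos_den_act: "A \<in> Od d \<Longrightarrow> x \<in> Vsp d \<Longrightarrow> lanczos_den d k (act d A x) = lanczos_den d k x"
  and qform_lanczos_vec_act: "A \<in> Od d \<Longrightarrow> x \<in> Vsp d \<Longrightarrow>
    qform d (lanczos_vec d k (act d A x)) = qform d (lanczos_vec d k x)"
  using lanczos_act by (simp_all add: qform_mat_vec_Od)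

lemma qform_single:
  assumes "a \<in> {1..d}" "\<And>i. i \<in> {1..d} \<Longrightarrow> u i = (if i = a then c else 0)"
  shows "qform d u = c\<^sup>2"
proof -
  have "qform d u = (u a)\<^sup>2" unfolding qform_def by (rule sum_eq_single_term) (use assms in auto)
  then show ?thesis using assms by simp
qed

lemma Lset_iff:
  "x \<in> Lset d m \<longleftrightarrow> x \<in> Vsp d \<and> (1 \<le> m \<longrightarrow> (\<forall>k\<in>{1..d-1}. fst x k = 0))
     \<and> (\<forall>i\<in>{2..m}. \<forall>k\<in>{1..d-i}. snd x k (d + 2 - i) = 0)"
proof (induction m rule: induct_nat_012)
  case (ge2 n)
  have "{2..Suc (Suc n)} = insert (Suc (Suc n)) {2..Suc n}" by auto
  then show ?case using ge2 by auto
qed auto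

lemma Lset_Vsp: "x \<in> Lset d m \<Longrightarrow> x \<in> Vsp d"
  unfolding Lset_iff by blast

lemma Lset_antimono: "m \<le> m' \<Longrightarrow> x \<in> Lset d m' \<Longrightarrow> x \<in> Lset d m"
  unfolding Lset_iff by auto

lemma Lset_vec_zero: "x \<in> Lset d m \<Longrightarrow> 1 \<le> m \<Longrightarrow> 1 \<le> k \<Longrightarrow> k < d \<Longrightarrow> fst x k = 0"
  unfolding Lset_iff by auto

lemma Lset_col_zero:
  assumes x: "x \<in> Lset d m" and j: "j \<le> d" "d - m + 2 \<le> j" and k: "1 \<le> k" "k + 2 \<le> j"
  shows "snd x k j = 0"
proof -
  have "d + 2 - j \<in> {2..m}" "k \<in> {1..d - (d + 2 - j)}" "d + 2 - (d + 2 - j) = j" using j k by auto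
  then show ?thesis using x unfolding Lset_iff by metis
qed

text \<open>The part of column d - m + 1 above the diagonal: the entries that survive in
  f_(m+1) restricted to L^(m).\<close>

definition col_vec :: "nat \<Rightarrow> nat \<Rightarrow> pt \<Rightarrow> nat \<Rightarrow> complex" where
  "col_vec d m x i = (if 1 \<le> i \<and> i \<le> d - m then snd x i (d - m + 1) else 0)"

lemma qform_col_vec:
  "qform d (col_vec d m x) = (\<Sum>k=1..d-m. (snd x k (d - m + 1))\<^sup>2)"
proof -
  have "qform d (col_vec d m x) = (\<Sum>k=1..d-m. (col_vec d m x k)\<^sup>2)"
    unfolding qform_def by (rule sum.mono_neutral_right) (auto simp: col_vec_def)
  also have "\<dots> = (\<Sum>k=1..d-m. (snd x k (d - m + 1))\<^sup>2)"
    by (rule sum.cong[OF refl]) (auto simp: col_vec_def)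
  finally show ?thesis .
qed

lemma polyfun_qform_col_vec: "1 \<le> m \<Longrightarrow> (\<lambda>x. qform d (col_vec d m x)) \<in> polyfun d"
  unfolding qform_col_vec by (auto intro!: polyfun_sum polyfun_power polyfun.pmat)

text \<open>On L^(m) the Lanczos vector p_m is a multiple of col_vec d m x, and on L^(m+1) it is a
  multiple of the basis vector e_(d-m); the factors are the following two scalars.\<close>

fun lanczos_scale :: "nat \<Rightarrow> nat \<Rightarrow> pt \<Rightarrow> complex" where
  "lanczos_scale d 0 x = 0"
| "lanczos_scale d (Suc 0) x = fst x d"
| "lanczos_scale d (Suc (Suc m)) x = lanczos_den d (Suc m) x * qform d (lanczos_vec d m x)
     * lanczos_scale d (Suc m) x * snd x (d - Suc m) (d - Suc m + 1)"

definition lanczos_pivot :: "nat \<Rightarrow> nat \<Rightarrow> pt \<Rightarrow> complex" where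
  "lanczos_pivot d m x = (if m = 0 then fst x d else lanczos_scale d m x * snd x (d - m) (d - m + 1))"

lemma lanczos_scale_pivot:
  "lanczos_scale d (Suc m) x * lanczos_den d m x = lanczos_den d (Suc m) x * lanczos_pivot d m x"
  by (cases m) (simp_all add: lanczos_pivot_def power2_eq_square mult_ac)

lemma lanczos_vec_concentrated:
  assumes d: "m + 2 \<le> d" and x: "x \<in> Lset d (Suc m)"
    and col: "1 \<le> m \<Longrightarrow> \<forall>i\<in>{1..d}. lanczos_vec d m x i = lanczos_scale d m x * col_vec d m x i"
    and i: "i \<in> {1..d}"
  shows "lanczos_vec d m x i = (if i = d - m then lanczos_pivot d m x else 0)"
proof (cases "m = 0")
  case True
  then show ?thesis using Lset_vec_zero[OF x, of i] i by (auto simp: lanczos_pivot_def)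
next
  case False
  then have "lanczos_vec d m x i = lanczos_scale d m x * col_vec d m x i" using col i by simp
  moreover have "snd x i (d - m + 1) = 0" if "i < d - m"
    by (rule Lset_col_zero[OF x]) (use d i that False in auto)
  ultimately show ?thesis using False i by (auto simp: col_vec_def lanczos_pivot_def)
qed

lemma lanczos_vec_one_Lset:
  assumes x: "x \<in> Lset d (Suc 0)" and d: "2 \<le> d" and i: "i \<in> {1..d}"
  shows "lanczos_vec d (Suc 0) x i = lanczos_scale d (Suc 0) x * col_vec d (Suc 0) x i"
proof -
  have xV: "x \<in> Vsp d" by (rule Lset_Vsp[OF x])
  have "lanczos_vec d (Suc 0) x i = (\<Sum>l=1..d. snd x i l * fst x l)"
    by (simp add: mat_vec_def skew_mat_Vsp[OF xV])
  also have "\<dots> = snd x i d * fst x d"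
    by (rule sum_eq_single_term) (use d Lset_vec_zero[OF x] in auto)
  finally show ?thesis using i Vsp_diag[OF xV, of d] by (cases "i = d") (auto simp: col_vec_def)
qed

lemma Lset_column_decomp:
  assumes d: "m + 3 \<le> d" and x: "x \<in> Lset d (Suc (Suc m))" and i: "i \<in> {1..d}"
  shows "snd x i (d - Suc m) = col_vec d (Suc (Suc m)) x i
    - (if i = d - Suc m + 1 then snd x (d - Suc m) (d - Suc m + 1) else 0)"
proof -
  have xV: "x \<in> Vsp d" by (rule Lset_Vsp[OF x])
  define j where "j = d - Suc m"
  have j: "2 \<le> j" "j + 1 \<le> d" "d - Suc (Suc m) = j - 1" "d - Suc (Suc m) + 1 = j"
    using d by (auto simp: j_def)
  consider "i < j" | "i = j" | "i = j + 1" | "j + 2 \<le> i" by linarith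
  then have "snd x i j = col_vec d (Suc (Suc m)) x i - (if i = j + 1 then snd x j (j + 1) else 0)"
  proof cases
    case 4
    have "snd x j i = 0" by (rule Lset_col_zero[OF x]) (use 4 i j in \<open>auto simp: j_def\<close>)
    then show ?thesis using 4 Vsp_skew[OF xV, of i j] by (auto simp: col_vec_def j)
  qed (use i j Vsp_diag[OF xV] Vsp_skew[OF xV, of "j + 1" j] in \<open>auto simp: col_vec_def\<close>)
  then show ?thesis by (simp add: j_def)
qed

lemma lanczos_vec_Lset_step:
  assumes d: "m + 3 \<le> d" and x: "x \<in> Lset d (Suc (Suc m))"
    and p0: "\<And>i. i \<in> {1..d} \<Longrightarrow> lanczos_vec d m x i = (if i = d - m then lanczos_pivot d m x else 0)"
    and p1: "\<And>i. i \<in> {1..d} \<Longrightarrow>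
      lanczos_vec d (Suc m) x i = (if i = d - Suc m then lanczos_pivot d (Suc m) x else 0)"
    and i: "i \<in> {1..d}"
  shows "lanczos_vec d (Suc (Suc m)) x i = lanczos_scale d (Suc (Suc m)) x * col_vec d (Suc (Suc m)) x i"
proof -
  have xV: "x \<in> Vsp d" by (rule Lset_Vsp[OF x])
  define j where "j = d - Suc m"
  define a where "a = snd x j (j + 1)"
  have j: "j + 1 = d - m" "2 \<le> j" "j + 1 \<le> d" using d by (auto simp: j_def)
  have q0: "qform d (lanczos_vec d m x) = (lanczos_pivot d m x)\<^sup>2"
    by (rule qform_single[OF _ p0]) (use d in auto)
  have q1: "qform d (lanczos_vec d (Suc m) x) = (lanczos_pivot d (Suc m) x)\<^sup>2"
    by (rule qform_single[OF _ p1]) (use d in auto)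
  have Mp1: "mat_vec d (skew_mat x) (lanczos_vec d (Suc m) x) i = snd x i j * lanczos_pivot d (Suc m) x"
  proof -
    have "mat_vec d (skew_mat x) (lanczos_vec d (Suc m) x) i = snd x i j * lanczos_vec d (Suc m) x j"
      unfolding mat_vec_def skew_mat_Vsp[OF xV]
      by (rule sum_eq_single_term) (use p1 j in \<open>auto simp: j_def\<close>)
    then show ?thesis using p1[of j] j by (auto simp: j_def)
  qed
  have col: "snd x i j = col_vec d (Suc (Suc m)) x i - (if i = j + 1 then a else 0)"
    unfolding j_def a_def by (rule Lset_column_decomp[OF d x i])
  have pivot1: "lanczos_pivot d (Suc m) x = lanczos_scale d (Suc m) x * a"
    by (simp add: lanczos_pivot_def a_def j_def)
  have scale2: "lanczos_scale d (Suc (Suc m)) x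
      = lanczos_den d (Suc m) x * qform d (lanczos_vec d m x) * lanczos_scale d (Suc m) x * a"
    by (simp add: a_def j_def)
  have p0i: "lanczos_vec d m x i = (if i = j + 1 then lanczos_pivot d m x else 0)"
    using p0[OF i] j by simp
  have "lanczos_vec d (Suc (Suc m)) x i
      = lanczos_den d (Suc m) x * qform d (lanczos_vec d m x) * (snd x i j * lanczos_pivot d (Suc m) x)
        + qform d (lanczos_vec d (Suc m) x) * lanczos_den d m x * lanczos_vec d m x i"
    by (simp add: Mp1)
  also have "\<dots> = lanczos_scale d (Suc (Suc m)) x * col_vec d (Suc (Suc m)) x i
      + (if i = j + 1 then lanczos_scale d (Suc m) x * a\<^sup>2 * lanczos_pivot d m x
          * (lanczos_scale d (Suc m) x * lanczos_den d m x - lanczos_den d (Suc m) x * lanczos_pivot d m x)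
         else 0)"
    unfolding col p0i q0 q1 pivot1 scale2 by (simp add: algebra_simps power2_eq_square)
  finally show ?thesis using lanczos_scale_pivot[of d m x] by simp
qed

lemma lanczos_vec_Lset:
  "1 \<le> m \<Longrightarrow> m + 1 \<le> d \<Longrightarrow> x \<in> Lset d m \<Longrightarrow> i \<in> {1..d}
    \<Longrightarrow> lanczos_vec d m x i = lanczos_scale d m x * col_vec d m x i"
proof (induction m arbitrary: x i rule: less_induct)
  case (less m)
  consider "m = Suc 0" | n where "m = Suc (Suc n)" using less.prems(1) by (cases m; cases "m - 1") auto
  then show ?case
  proof cases
    case 1
    then show ?thesis using less.prems lanczos_vec_one_Lset by simp
  next
    case (2 n)
    have x: "x \<in> Lset d (Suc (Suc n))" using less.prems 2 by simp
    have x1: "x \<in> Lset d (Suc n)" by (rule Lset_antimono[OF _ x]) simp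
    have p0: "lanczos_vec d n x i' = (if i' = d - n then lanczos_pivot d n x else 0)" if "i' \<in> {1..d}" for i'
      by (rule lanczos_vec_concentrated[OF _ x1 _ that])
        (use less.prems 2 less.IH[of n] Lset_antimono[OF _ x, of n] in auto)
    have p1: "lanczos_vec d (Suc n) x i' = (if i' = d - Suc n then lanczos_pivot d (Suc n) x else 0)"
      if "i' \<in> {1..d}" for i'
      by (rule lanczos_vec_concentrated[OF _ x _ that]) (use less.prems 2 less.IH[of "Suc n"] x1 in auto)
    show ?thesis
      unfolding 2 by (rule lanczos_vec_Lset_step[OF _ x p0 p1]) (use less.prems 2 in auto)
  qed
qed

lemma lanczos_vec_Lset_Suc:
  assumes d: "m + 2 \<le> d" and x: "x \<in> Lset d (Suc m)" and i: "i \<in> {1..d}"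
  shows "lanczos_vec d m x i = (if i = d - m then lanczos_pivot d m x else 0)"
  by (rule lanczos_vec_concentrated[OF d x _ i])
    (use d lanczos_vec_Lset[of m d x] Lset_antimono[of m "Suc m" x d] x in auto)

lemma qform_lanczos_vec_Lset:
  assumes "1 \<le> m" "m + 1 \<le> d" "x \<in> Lset d m"
  shows "qform d (lanczos_vec d m x) = (lanczos_scale d m x)\<^sup>2 * qform d (col_vec d m x)"
proof -
  have "qform d (lanczos_vec d m x) = (\<Sum>i=1..d. (lanczos_scale d m x)\<^sup>2 * (col_vec d m x i)\<^sup>2)"
    unfolding qform_def by (rule sum.cong[OF refl]) (simp add: lanczos_vec_Lset[OF assms] power_mult_distrib)
  then show ?thesis by (simp add: qform_def sum_distrib_left)
qed

definition line :: "pt \<Rightarrow> pt \<Rightarrow> complex \<Rightarrow> pt" where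
  "line x y t = ((\<lambda>i. fst x i + t * (fst y i - fst x i)), (\<lambda>i j. snd x i j + t * (snd y i j - snd x i j)))"

lemma line_0: "line x y 0 = x" and line_1: "line x y 1 = y"
  by (cases x, simp add: line_def) (cases y, simp add: line_def)

lemma polyfun_on_line: "p \<in> polyfun d \<Longrightarrow> \<exists>q. \<forall>t. p (line x y t) = poly q t"
proof (induction p rule: polyfun.induct)
  case (pconst c)
  show ?case by (rule exI[of _ "[:c:]"]) simp
next
  case (pvec i)
  show ?case by (rule exI[of _ "[:fst x i, fst y i - fst x i:]"]) (simp add: line_def mult.commute)
next
  case (pmat i j)
  show ?case by (rule exI[of _ "[:snd x i j, snd y i j - snd x i j:]"]) (simp add: line_def mult.commute)
next
  case (padd p q)
  then obtain a b where "\<forall>t. p (line x y t) = poly a t" "\<forall>t. q (line x y t) = poly b t" by blast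
  then show ?case by (intro exI[of _ "a + b"]) simp
next
  case (pmult p q)
  then obtain a b where "\<forall>t. p (line x y t) = poly a t" "\<forall>t. q (line x y t) = poly b t" by blast
  then show ?case by (intro exI[of _ "a * b"]) simp
qed

text \<open>Polynomials form an integral domain on every set closed under lines, since they do on
  each line.\<close>

lemma polyfun_cancel_on_lines:
  assumes S: "\<And>x y t. x \<in> S \<Longrightarrow> y \<in> S \<Longrightarrow> line x y t \<in> S"
    and h: "h \<in> polyfun d" and e: "e \<in> polyfun d" and he: "\<And>y. y \<in> S \<Longrightarrow> h y * e y = 0"
    and y0: "y0 \<in> S" "e y0 \<noteq> 0" and x: "x \<in> S"
  shows "h x = 0"
proof -
  obtain qh where qh: "\<forall>t. h (line x y0 t) = poly qh t" using polyfun_on_line[OF h] by blast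
  obtain qe where qe: "\<forall>t. e (line x y0 t) = poly qe t" using polyfun_on_line[OF e] by blast
  have "poly (qh * qe) t = 0" for t
    using he[OF S[OF x y0(1)], of t] qh qe by simp
  then have "qh * qe = 0" using poly_all_0_iff_0 by blast
  moreover have "qe \<noteq> 0" using qe[rule_format, of 1] y0 by (auto simp: line_1)
  ultimately have "qh = 0" by simp
  then show ?thesis using qh[rule_format, of 0] by (simp add: line_0)
qed

lemma line_Vsp: assumes x: "x \<in> Vsp d" and y: "y \<in> Vsp d" shows "line x y t \<in> Vsp d"
proof -
  have "\<forall>i. i \<notin> {1..d} \<longrightarrow> fst (line x y t) i = 0"
    using Vsp_vec_zero[OF x] Vsp_vec_zero[OF y] by (simp add: line_def)
  moreover have "\<forall>i j. snd (line x y t) i j = - snd (line x y t) j i"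
  proof (intro allI)
    fix i j
    show "snd (line x y t) i j = - snd (line x y t) j i"
      using Vsp_skew[OF x, of i j] Vsp_skew[OF y, of i j] by (simp add: line_def algebra_simps)
  qed
  moreover have "\<forall>i j. i \<notin> {1..d} \<or> j \<notin> {1..d} \<longrightarrow> snd (line x y t) i j = 0"
    using Vsp_mat_zero[OF x] Vsp_mat_zero[OF y] by (simp add: line_def)
  ultimately show ?thesis unfolding Vsp_iff by blast
qed

lemma line_Lset: assumes x: "x \<in> Lset d m" and y: "y \<in> Lset d m" shows "line x y t \<in> Lset d m"
  using x y line_Vsp[OF Lset_Vsp[OF x] Lset_Vsp[OF y]] unfolding Lset_iff by (simp add: line_def)

lemma rat_equiv_refl: "ratfun d F \<Longrightarrow> rat_equiv d F F"
  unfolding rat_equiv_def by (simp add: mult.commute)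

lemma reval_fraction:
  assumes F: "ratfun d F" and x: "x \<in> Vsp d" and q: "snd F x \<noteq> 0"
  shows "x \<in> rdom d F" "reval d F x = fst F x / snd F x"
proof -
  show "x \<in> rdom d F" unfolding rdom_def using x q rat_equiv_refl[OF F] by blast
  have "\<exists>c g. rat_equiv d F g \<and> snd g x \<noteq> 0 \<and> c = fst g x / snd g x"
    using q rat_equiv_refl[OF F] by blast
  from someI_ex[OF this] obtain g
    where g: "rat_equiv d F g" "snd g x \<noteq> 0" "reval d F x = fst g x / snd g x"
    unfolding reval_def by blast
  have "fst F x * snd g x = fst g x * snd F x" using g(1) x unfolding rat_equiv_def by blast
  then have "fst g x = fst F x * snd g x / snd F x" using q by (simp add: eq_divide_eq)
  then show "reval d F x = fst F x / snd F x" using g(2,3) by simp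
qed

text \<open>reval may use a representative with another denominator; cancelling along lines through
  a point where the given denominator is nonzero shows that it still agrees with phi.\<close>

lemma reval_on_lines:
  assumes F: "ratfun d F" and phi: "phi \<in> polyfun d"
    and SV: "S \<subseteq> Vsp d" and S: "\<And>x y t. x \<in> S \<Longrightarrow> y \<in> S \<Longrightarrow> line x y t \<in> S"
    and y0: "y0 \<in> S" "snd F y0 \<noteq> 0" and eq: "\<And>y. y \<in> S \<Longrightarrow> fst F y = phi y * snd F y"
    and x: "x \<in> S" "x \<in> rdom d F"
  shows "reval d F x = phi x"
proof -
  have "\<exists>c g. rat_equiv d F g \<and> snd g x \<noteq> 0 \<and> c = fst g x / snd g x"
    using x(2) unfolding rdom_def by blast
  from someI_ex[OF this] obtain g
    where g: "rat_equiv d F g" "snd g x \<noteq> 0" "reval d F x = fst g x / snd g x"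
    unfolding reval_def by blast
  have gp: "fst g \<in> polyfun d" "snd g \<in> polyfun d" and Fp: "snd F \<in> polyfun d"
    using g(1) F unfolding rat_equiv_def ratfun_def by auto
  have "(\<lambda>y. phi y * snd g y - fst g y) x = 0"
  proof (rule polyfun_cancel_on_lines[OF S _ Fp _ y0 x(1)])
    show "(\<lambda>y. phi y * snd g y - fst g y) \<in> polyfun d"
      by (rule polyfun_minus[OF polyfun.pmult[OF phi gp(2)] gp(1)])
    fix y assume y: "y \<in> S"
    have "fst F y * snd g y = fst g y * snd F y" using g(1) SV y unfolding rat_equiv_def by blast
    then show "(phi y * snd g y - fst g y) * snd F y = 0" using eq[OF y]
      by (simp add: algebra_simps)
  qed
  then have "fst g x = phi x * snd g x" by simp
  then show ?thesis using g(2,3) by simp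
qed

definition inv_num :: "nat \<Rightarrow> nat \<Rightarrow> pt \<Rightarrow> complex" where
  "inv_num d k x = (if k = 1 then qform d (fst x)
     else qform d (lanczos_vec d (k - 1) x) * (lanczos_den d (k - 2) x)\<^sup>2)"

definition inv_den :: "nat \<Rightarrow> nat \<Rightarrow> pt \<Rightarrow> complex" where
  "inv_den d k x = (if k = 1 then 1
     else (lanczos_den d (k - 1) x)\<^sup>2 * qform d (lanczos_vec d (k - 2) x))"

definition invariant :: "nat \<Rightarrow> nat \<Rightarrow> (pt \<Rightarrow> complex) \<times> (pt \<Rightarrow> complex)" where
  "invariant d k = (inv_num d k, inv_den d k)"

lemma polyfun_inv_num: "inv_num d k \<in> polyfun d"
proof (cases "k = 1")
  case True
  then have "inv_num d k = (\<lambda>x. qform d (lanczos_vec d 0 x))" by (simp add: inv_num_def fun_eq_iff)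
  then show ?thesis using polyfun_qform_lanczos_vec[of d 0] by simp
next
  case False
  then have "inv_num d k = (\<lambda>x. qform d (lanczos_vec d (k - 1) x) * (lanczos_den d (k - 2) x)\<^sup>2)"
    by (simp add: inv_num_def fun_eq_iff)
  then show ?thesis
    by (simp add: polyfun.pmult polyfun_power polyfun_qform_lanczos_vec polyfun_lanczos_den)
qed

lemma polyfun_inv_den: "inv_den d k \<in> polyfun d"
proof (cases "k = 1")
  case True
  then have "inv_den d k = (\<lambda>x. 1)" by (simp add: inv_den_def fun_eq_iff)
  then show ?thesis by (simp add: polyfun.pconst)
next
  case False
  then have "inv_den d k = (\<lambda>x. (lanczos_den d (k - 1) x)\<^sup>2 * qform d (lanczos_vec d (k - 2) x))"
    by (simp add: inv_den_def fun_eq_iff)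
  then show ?thesis
    by (simp add: polyfun.pmult polyfun_power polyfun_qform_lanczos_vec polyfun_lanczos_den)
qed

lemma inv_num_act: "A \<in> Od d \<Longrightarrow> x \<in> Vsp d \<Longrightarrow> inv_num d k (act d A x) = inv_num d k x"
  and inv_den_act: "A \<in> Od d \<Longrightarrow> x \<in> Vsp d \<Longrightarrow> inv_den d k (act d A x) = inv_den d k x"
  by (simp_all add: inv_num_def inv_den_def act_fst qform_mat_vec_Od qform_lanczos_vec_act lanczos_den_act)

lemma rat_invariant_invariant: "rat_invariant d (invariant d k)"
  unfolding rat_invariant_def invariant_def by (simp add: inv_num_act inv_den_act)

lemma inv_num_Lset:
  assumes m: "1 \<le> m" "m + 1 \<le> d" and x: "x \<in> Lset d m"
  shows "inv_num d (Suc m) x = qform d (col_vec d m x) * inv_den d (Suc m) x"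
proof -
  obtain n where n: "m = Suc n" using m by (cases m) auto
  have "qform d (lanczos_vec d n x) = (lanczos_pivot d n x)\<^sup>2"
    by (rule qform_single[OF _ lanczos_vec_Lset_Suc]) (use m n x in auto)
  moreover have "lanczos_scale d m x * lanczos_den d n x = lanczos_den d m x * lanczos_pivot d n x"
    using lanczos_scale_pivot[of d n x] n by simp
  ultimately show ?thesis
    using n m qform_lanczos_vec_Lset[OF m x] unfolding inv_num_def inv_den_def
    by (simp add: power_mult_distrib[symmetric] mult_ac)
qed

definition generic_set :: "nat \<Rightarrow> pt set" where
  "generic_set d = {x \<in> Vsp d. \<forall>j<d. lanczos_den d j x \<noteq> 0 \<and> qform d (lanczos_vec d j x) \<noteq> 0}"

lemma generic_set_act: "A \<in> Od d \<Longrightarrow> x \<in> generic_set d \<Longrightarrow> act d A x \<in> generic_set d"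
  unfolding generic_set_def by (simp add: act_Vsp qform_lanczos_vec_act lanczos_den_act)

lemma zariski_open_generic_set: "zariski_open d (generic_set d)"
proof -
  let ?p = "\<lambda>x. \<Prod>j\<in>{..<d}. lanczos_den d j x * qform d (lanczos_vec d j x)"
  have "?p \<in> polyfun d"
    by (rule polyfun_prod) (simp_all add: polyfun.pmult polyfun_lanczos_den polyfun_qform_lanczos_vec)
  moreover have "generic_set d = {x \<in> Vsp d. \<exists>p\<in>{?p}. p x \<noteq> 0}"
    unfolding generic_set_def by auto
  ultimately show ?thesis unfolding zariski_open_def by blast
qed

lemma generic_set_inv_nonzero:
  assumes x: "x \<in> generic_set d" and k: "k \<in> {1..d}"
  shows "inv_num d k x \<noteq> 0" "inv_den d k x \<noteq> 0"
proof -
  have h: "lanczos_den d j x \<noteq> 0 \<and> qform d (lanczos_vec d j x) \<noteq> 0" if "j < d" for j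
    using x that unfolding generic_set_def by blast
  have "k - 1 < d" "k - 2 < d" "0 < d" using k by auto
  note h1 = h[OF this(1)] and h2 = h[OF this(2)] and h0 = h[OF this(3)]
  show "inv_num d k x \<noteq> 0" using h1 h2 h0 k by (auto simp: inv_num_def)
  show "inv_den d k x \<noteq> 0" using h1 h2 h0 k by (auto simp: inv_den_def)
qed

lemma generic_setI:
  assumes x: "x \<in> Vsp d" and inv: "\<And>k. k \<in> {1..d} \<Longrightarrow> inv_den d k x \<noteq> 0 \<Longrightarrow> inv_num d k x \<noteq> 0"
  shows "x \<in> generic_set d"
proof -
  have "j < d \<Longrightarrow> lanczos_den d j x \<noteq> 0 \<and> qform d (lanczos_vec d j x) \<noteq> 0" for j
  proof (induction j rule: less_induct)
    case (less j)
    consider "j = 0" | "j = Suc 0" | n where "j = Suc (Suc n)" by (cases j; cases "j - 1") auto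
    then show ?case
    proof cases
      case 1
      then show ?thesis using inv[of 1] less by (simp add: inv_num_def inv_den_def)
    next
      case 2
      then show ?thesis using inv[of 2] less.IH[of 0] less by (simp add: inv_num_def inv_den_def)
    next
      case 3
      have den: "lanczos_den d j x \<noteq> 0" using less.IH[of n] less.IH[of "Suc n"] less 3 by simp
      then have "inv_den d (Suc j) x \<noteq> 0" using less.IH[of "Suc n"] less 3
        by (simp add: inv_den_def)
      then have "inv_num d (Suc j) x \<noteq> 0" using inv less by simp
      then show ?thesis using den 3 by (simp add: inv_num_def)
    qed
  qed
  then show ?thesis unfolding generic_set_def using x by blast
qed

definition base_point :: "nat \<Rightarrow> pt" where
  "base_point d = ((\<lambda>i. if i = d then 1 else 0),
     (\<lambda>i j. if 1 \<le> i \<and> j = i + 1 \<and> j \<le> d then 1 else if 1 \<le> j \<and> i = j + 1 \<and> i \<le> d then -1 else 0))"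

lemma base_point_Lset: "2 \<le> d \<Longrightarrow> m \<le> d - 1 \<Longrightarrow> base_point d \<in> Lset d m"
  by (rule Lset_antimono[of m "d - 1"]) (auto simp: Lset_iff Vsp_iff base_point_def)

lemma qform_col_vec_base_point:
  assumes "1 \<le> m" "m + 1 \<le> d"
  shows "qform d (col_vec d m (base_point d)) = 1"
proof -
  have "(\<Sum>k=1..d-m. (snd (base_point d) k (d - m + 1))\<^sup>2) = (snd (base_point d) (d - m) (d - m + 1))\<^sup>2"
    by (rule sum_eq_single_term) (use assms in \<open>auto simp: base_point_def\<close>)
  moreover have "snd (base_point d) (d - m) (d - m + 1) = 1" using assms by (auto simp: base_point_def)
  ultimately show ?thesis by (simp add: qform_col_vec)
qed

lemma base_point_generic: assumes d: "2 \<le> d" shows "base_point d \<in> generic_set d"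
proof -
  let ?x = "base_point d"
  have "j < d \<Longrightarrow> lanczos_den d j ?x \<noteq> 0 \<and> qform d (lanczos_vec d j ?x) \<noteq> 0
      \<and> (1 \<le> j \<longrightarrow> lanczos_scale d j ?x \<noteq> 0)" for j
  proof (induction j rule: less_induct)
    case (less j)
    have q: "qform d (lanczos_vec d i ?x) = (lanczos_scale d i ?x)\<^sup>2" if "1 \<le> i" "i < d" for i
      using qform_lanczos_vec_Lset[OF that(1) _ base_point_Lset[OF d]] qform_col_vec_base_point[OF that(1)]
        that by simp
    consider "j = 0" | "j = Suc 0" | n where "j = Suc (Suc n)" by (cases j; cases "j - 1") auto
    then show ?case
    proof cases
      case 1
      have "qform d (fst ?x) = 1\<^sup>2"
        by (rule qform_single[of d]) (use d in \<open>auto simp: base_point_def\<close>)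
      then show ?thesis using 1 by simp
    next
      case 2
      then show ?thesis using q[of 1] less d by (simp add: base_point_def)
    next
      case 3
      have "snd ?x (d - Suc n) (d - Suc n + 1) = 1" using less 3 by (auto simp: base_point_def)
      then show ?thesis using less.IH[of n] less.IH[of "Suc n"] q[of j] less 3 by simp
    qed
  qed
  moreover have "?x \<in> Vsp d" using d by (auto simp: Vsp_iff base_point_def)
  ultimately show ?thesis unfolding generic_set_def by blast
qed

lemma ratfun_invariant: assumes d: "2 \<le> d" and k: "k \<in> {1..d}" shows "ratfun d (invariant d k)"
proof -
  have "base_point d \<in> Vsp d" "inv_den d k (base_point d) \<noteq> 0"
    using base_point_generic[OF d] generic_set_inv_nonzero(2)[OF _ k]
      by (auto simp: generic_set_def)
  then show ?thesis unfolding ratfun_def invariant_def using polyfun_inv_num polyfun_inv_den by auto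
qed

lemma reval_invariant:
  "2 \<le> d \<Longrightarrow> k \<in> {1..d} \<Longrightarrow> x \<in> Vsp d \<Longrightarrow> inv_den d k x \<noteq> 0
    \<Longrightarrow> x \<in> rdom d (invariant d k) \<and> reval d (invariant d k) x = inv_num d k x / inv_den d k x"
  using reval_fraction[OF ratfun_invariant, of d k x] by (simp add: invariant_def)

lemma generic_set_eq:
  assumes d: "2 \<le> d"
  shows "{x \<in> Vsp d. (\<forall>k\<in>{1..d}. x \<in> rdom d (invariant d k)) \<and> (\<Prod>k=1..d. reval d (invariant d k) x) \<noteq> 0}
    = generic_set d" (is "?U = _")
proof
  show "?U \<subseteq> generic_set d"
  proof
    fix x assume "x \<in> ?U"
    then have x: "x \<in> Vsp d" and rv: "\<forall>k\<in>{1..d}. reval d (invariant d k) x \<noteq> 0" by auto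
    show "x \<in> generic_set d"
    proof (rule generic_setI[OF x])
      fix k assume k: "k \<in> {1..d}" "inv_den d k x \<noteq> 0"
      then show "inv_num d k x \<noteq> 0" using reval_invariant[OF d k(1) x k(2)] rv k(1) by auto
    qed
  qed
  show "generic_set d \<subseteq> ?U"
  proof
    fix x assume x: "x \<in> generic_set d"
    have "x \<in> rdom d (invariant d k) \<and> reval d (invariant d k) x \<noteq> 0" if k: "k \<in> {1..d}" for k
      using reval_invariant[OF d k _ generic_set_inv_nonzero(2)[OF x k]] generic_set_inv_nonzero[OF x k] x
      by (simp add: generic_set_def)
    then show "x \<in> ?U" using x by (simp add: generic_set_def)
  qed
qed

lemma reval_invariant_Lset:
  assumes d: "2 \<le> d" and m: "1 \<le> m" "m + 1 \<le> d"
    and x: "x \<in> Lset d m" "x \<in> rdom d (invariant d (Suc m))"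
  shows "reval d (invariant d (Suc m)) x = qform d (col_vec d m x)"
proof (rule reval_on_lines[OF ratfun_invariant[OF d] polyfun_qform_col_vec[OF m(1)] _ line_Lset _ _ _ x])
  show "Lset d m \<subseteq> Vsp d" using Lset_Vsp by blast
  show "base_point d \<in> Lset d m" using base_point_Lset[OF d] m by simp
  show "snd (invariant d (Suc m)) (base_point d) \<noteq> 0"
    using generic_set_inv_nonzero(2)[OF base_point_generic[OF d]] m by (simp add: invariant_def)
  show "fst (invariant d (Suc m)) y = qform d (col_vec d m y) * snd (invariant d (Suc m)) y"
    if "y \<in> Lset d m" for y
    using inv_num_Lset[OF m that] by (simp add: invariant_def)
qed (use m in auto)

lemma base_point_Lset_rdom:
  assumes d: "2 \<le> d" and m: "1 \<le> m" "m + 1 \<le> d"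
  shows "base_point d \<in> Lset d m \<inter> rdom d (invariant d (Suc m))"
proof -
  have "base_point d \<in> Vsp d" using base_point_generic[OF d] by (simp add: generic_set_def)
  then have "base_point d \<in> rdom d (invariant d (Suc m))"
    using reval_invariant[OF d] generic_set_inv_nonzero(2)[OF base_point_generic[OF d]] m by simp
  then show ?thesis using base_point_Lset[OF d] m by simp
qed

lemma reval_invariant_one:
  "2 \<le> d \<Longrightarrow> x \<in> Vsp d \<Longrightarrow> x \<in> rdom d (invariant d 1) \<and> reval d (invariant d 1) x = (\<Sum>i=1..d. (fst x i)\<^sup>2)"
  using reval_invariant[of d 1 x] by (simp add: inv_num_def inv_den_def qform_def)

definition householder :: "nat \<Rightarrow> (nat \<Rightarrow> complex) \<Rightarrow> Defs.mat" where
  "householder d u i j = (if i \<in> {1..d} \<and> j \<in> {1..d}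
     then (if i = j then 1 else 0) - 2 / qform d u * u i * u j else 0)"

lemma householder_Od: assumes q: "qform d u \<noteq> 0" shows "householder d u \<in> Od d"
proof -
  define c where "c = 2 / qform d u"
  have cc: "c * c * qform d u = 2 * c" using q by (simp add: c_def field_simps power2_eq_square)
  have "(\<Sum>k=1..d. householder d u i k * householder d u j k) = (if i = j then 1 else 0)"
    if i: "i \<in> {1..d}" and j: "j \<in> {1..d}" for i j
  proof -
    have "(\<Sum>k=1..d. householder d u i k * householder d u j k)
        = (\<Sum>k=1..d. (if k = i then (if k = j then 1 else 0) - c * u j * u k else 0)
            - (if k = j then c * u i * u k else 0) + c * c * u i * u j * (u k)\<^sup>2)"
      by (rule sum.cong[OF refl]) (use i j in \<open>auto simp: householder_def c_def algebra_simps power2_eq_square\<close>)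
    also have "\<dots> = ((if i = j then 1 else 0) - c * u j * u i) - c * u i * u j + (c * c * qform d u) * (u i * u j)"
      using i j by (simp add: sum.distrib sum_subtractf sum_distrib_left qform_def mult_ac)
    also have "\<dots> = (if i = j then 1 else 0)" unfolding cc by (simp add: algebra_simps)
    finally show ?thesis .
  qed
  then show ?thesis unfolding Od_def by (auto simp: householder_def)
qed

lemma mat_vec_householder:
  assumes k: "k \<in> {1..d}"
  shows "mat_vec d (householder d u) w k = w k - 2 / qform d u * u k * (\<Sum>p=1..d. u p * w p)"
proof -
  have "mat_vec d (householder d u) w k = (\<Sum>p=1..d. (if p = k then w p else 0) - 2 / qform d u * u k * (u p * w p))"
    unfolding mat_vec_def by (rule sum.cong[OF refl]) (use k in \<open>auto simp: householder_def algebra_simps\<close>)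
  then show ?thesis using k by (simp add: sum_subtractf sum_distrib_left)
qed

lemma act_householder_snd:
  assumes k: "k \<in> {1..d}" and j: "j \<in> {1..d}" and uj: "u j = 0"
  shows "snd (act d (householder d u) y) k j = mat_vec d (householder d u) (\<lambda>p. snd y p j) k"
proof -
  have "householder d u j q = (if j = q then 1 else 0)" if "q \<in> {1..d}" for q
    using j that uj by (simp add: householder_def)
  then have "snd (act d (householder d u) y) k j
      = (\<Sum>p=1..d. \<Sum>q=1..d. householder d u k p * snd y p q * (if j = q then 1 else 0))"
    by (simp add: act_snd)
  also have "\<dots> = mat_vec d (householder d u) (\<lambda>p. snd y p j) k"
    using j by (simp add: mat_vec_def if_distrib[of "\<lambda>t. _ * t"] cong: if_cong)
  finally show ?thesis .
qed

text \<open>The reflection in u moves z onto the n-th axis; sigma is a square root of q(z) chosen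
  different from z_n, so that q(u) = 2 sigma (sigma - z_n) does not vanish.\<close>

lemma householder_to_axis:
  assumes n: "n \<in> {1..d}" and z: "\<And>i. n < i \<Longrightarrow> z i = 0" and q: "qform d z \<noteq> 0"
  obtains u where "qform d u \<noteq> 0" "\<And>i. n < i \<Longrightarrow> u i = 0"
    "\<And>k. k \<in> {1..d} \<Longrightarrow> k \<noteq> n \<Longrightarrow> mat_vec d (householder d u) z k = 0"
proof -
  define s where "s = csqrt (qform d z)"
  define sigma where "sigma = (if s = z n then - s else s)"
  have s: "s\<^sup>2 = qform d z" by (simp add: s_def)
  then have sigma: "sigma\<^sup>2 = qform d z" "sigma \<noteq> z n" "sigma \<noteq> 0" using q by (auto simp: sigma_def)
  define u where "u i = (if i \<in> {1..d} then z i - (if i = n then sigma else 0) else 0)" for i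
  have u_zero: "u i = 0" if "n < i" for i using that z[of i] by (auto simp: u_def)
  have uz: "(\<Sum>p=1..d. u p * z p) = sigma * (sigma - z n)"
  proof -
    have "(\<Sum>p=1..d. u p * z p) = (\<Sum>p=1..d. (z p)\<^sup>2 - (if p = n then sigma * z p else 0))"
      by (rule sum.cong[OF refl]) (auto simp: u_def power2_eq_square algebra_simps)
    then show ?thesis using n sigma(1) by (simp add: sum_subtractf qform_def power2_eq_square algebra_simps)
  qed
  have qu: "qform d u = 2 * (sigma * (sigma - z n))"
  proof -
    have "qform d u = (\<Sum>p=1..d. (z p)\<^sup>2 - (if p = n then 2 * sigma * z p - sigma\<^sup>2 else 0))"
      unfolding qform_def by (rule sum.cong[OF refl]) (auto simp: u_def power2_eq_square algebra_simps)
    then show ?thesis using n sigma(1) by (simp add: sum_subtractf qform_def power2_eq_square algebra_simps)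
  qed
  have nz: "sigma * (sigma - z n) \<noteq> 0" using sigma by simp
  then have qu0: "qform d u \<noteq> 0" by (simp add: qu)
  show thesis
  proof (rule that[OF qu0 u_zero])
    fix k assume k: "k \<in> {1..d}" "k \<noteq> n"
    then have "u k = z k" by (simp add: u_def)
    then show "mat_vec d (householder d u) z k = 0"
      unfolding mat_vec_householder[OF k(1)] uz qu using nz by simp
  qed
qed

lemma Lset_one_reachable:
  assumes y: "y \<in> Vsp d" and d: "1 \<le> d" and q: "qform d (fst y) \<noteq> 0"
  shows "\<exists>B\<in>Od d. act d B y \<in> Lset d (Suc 0)"
proof -
  have "d \<in> {1..d}" "\<And>i. d < i \<Longrightarrow> fst y i = 0" using d Vsp_vec_zero[OF y] by auto
  then obtain u where u: "qform d u \<noteq> 0" "\<And>i. d < i \<Longrightarrow> u i = 0"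
    "\<And>k. k \<in> {1..d} \<Longrightarrow> k \<noteq> d \<Longrightarrow> mat_vec d (householder d u) (fst y) k = 0"
    using householder_to_axis q by metis
  have "act d (householder d u) y \<in> Lset d (Suc 0)"
    using act_Vsp[OF householder_Od[OF u(1)] y] u(3) by (auto simp: act_fst)
  then show ?thesis using householder_Od[OF u(1)] by blast
qed

lemma mat_vec_householder_id:
  assumes u: "\<And>i. n < i \<Longrightarrow> u i = 0" and w: "\<And>p. 1 \<le> p \<Longrightarrow> p \<le> n \<Longrightarrow> w p = 0"
    and k: "k \<in> {1..d}"
  shows "mat_vec d (householder d u) w k = w k"
proof -
  have "(\<Sum>p=1..d. u p * w p) = 0"
    by (rule sum.neutral) (metis atLeastAtMost_iff mult_eq_0_iff not_le u w)
  then show ?thesis by (simp add: mat_vec_householder[OF k])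
qed

lemma mat_vec_householder_cong:
  assumes u: "\<And>i. n < i \<Longrightarrow> u i = 0" and w: "\<And>p. 1 \<le> p \<Longrightarrow> p \<le> n \<Longrightarrow> w p = z p"
    and k: "k \<in> {1..d}" "k \<le> n"
  shows "mat_vec d (householder d u) w k = mat_vec d (householder d u) z k"
proof -
  have "(\<Sum>p=1..d. u p * w p) = (\<Sum>p=1..d. u p * z p)"
    by (rule sum.cong[OF refl]) (metis atLeastAtMost_iff mult_eq_0_iff not_le u w)
  then show ?thesis using w k by (simp add: mat_vec_householder[OF k(1)])
qed

lemma householder_preserves_Lset:
  assumes m: "1 \<le> m" and y: "y \<in> Lset d m" and q: "qform d u \<noteq> 0"
    and u: "\<And>i. d - m < i \<Longrightarrow> u i = 0"
  shows "act d (householder d u) y \<in> Lset d m"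
proof -
  have yV: "y \<in> Vsp d" by (rule Lset_Vsp[OF y])
  have "fst (act d (householder d u) y) k = 0" if k: "k \<in> {1..d-1}" for k
  proof -
    have "fst (act d (householder d u) y) k = fst y k"
      unfolding act_fst by (rule mat_vec_householder_id[OF u]) (use k m Lset_vec_zero[OF y m] in auto)
    then show ?thesis using k Lset_vec_zero[OF y m, of k] by auto
  qed
  moreover have "snd (act d (householder d u) y) k (d + 2 - i) = 0"
    if i: "i \<in> {2..m}" and k: "k \<in> {1..d-i}" for i k
  proof -
    define j where "j = d + 2 - i"
    have j: "j \<in> {1..d}" "d - m < j" "k + 2 \<le> j" "k \<in> {1..d}" using i k m by (auto simp: j_def)
    have zero: "snd y p j = 0" if "1 \<le> p" "p + 2 \<le> j" for p
      by (rule Lset_col_zero[OF y _ _ that]) (use i j in \<open>auto simp: j_def\<close>)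
    have "snd (act d (householder d u) y) k j = mat_vec d (householder d u) (\<lambda>p. snd y p j) k"
      by (rule act_householder_snd[of k d j u y, OF j(4) j(1) u[OF j(2)]])
    also have "\<dots> = snd y k j"
      by (rule mat_vec_householder_id[OF u]) (use zero i j in \<open>auto simp: j_def\<close>)
    finally show ?thesis using zero[of k] j by (simp add: j_def)
  qed
  ultimately show ?thesis
    unfolding Lset_iff using act_Vsp[OF householder_Od[OF q] yV] by simp
qed

lemma Lset_Suc_reachable:
  assumes m: "1 \<le> m" "m + 2 \<le> d" and y: "y \<in> Lset d m" and q: "qform d (col_vec d m y) \<noteq> 0"
  shows "\<exists>B\<in>Od d. act d B y \<in> Lset d (Suc m)"
proof -
  define n where "n = d - m"
  have n: "n \<in> {1..d}" using m by (auto simp: n_def)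
  obtain u where u: "qform d u \<noteq> 0" "\<And>i. n < i \<Longrightarrow> u i = 0"
    "\<And>k. k \<in> {1..d} \<Longrightarrow> k \<noteq> n \<Longrightarrow> mat_vec d (householder d u) (col_vec d m y) k = 0"
    using householder_to_axis[OF n _ q] by (auto simp: col_vec_def n_def)
  have "snd (act d (householder d u) y) k (n + 1) = 0" if k: "k \<in> {1..n - 1}" for k
  proof -
    have "snd (act d (householder d u) y) k (n + 1) = mat_vec d (householder d u) (\<lambda>p. snd y p (n + 1)) k"
      by (rule act_householder_snd[OF _ _ u(2)]) (use k m in \<open>auto simp: n_def\<close>)
    also have "\<dots> = mat_vec d (householder d u) (col_vec d m y) k"
      by (rule mat_vec_householder_cong[OF u(2)]) (use k m in \<open>auto simp: col_vec_def n_def\<close>)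
    finally show ?thesis using u(3)[of k] k n by auto
  qed
  moreover obtain i where i: "m = Suc i" using m by (cases m) auto
  moreover have "act d (householder d u) y \<in> Lset d m"
    by (rule householder_preserves_Lset[OF m(1) y u(1)]) (use u(2) in \<open>simp add: n_def\<close>)
  ultimately have "act d (householder d u) y \<in> Lset d (Suc m)"
    using m by (simp add: n_def Suc_diff_Suc numeral_2_eq_2)
  then show ?thesis using householder_Od[OF u(1)] by blast
qed

lemma generic_set_reaches_Lset:
  assumes d: "2 \<le> d" and x: "x \<in> generic_set d"
  shows "\<exists>A\<in>Od d. act d A x \<in> Lset d (d - 1)"
proof -
  have xV: "x \<in> Vsp d" using x by (simp add: generic_set_def)
  have "1 \<le> m \<Longrightarrow> m \<le> d - 1 \<Longrightarrow> \<exists>A\<in>Od d. act d A x \<in> Lset d m" for m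
  proof (induction m)
    case (Suc m)
    show ?case
    proof (cases "m = 0")
      case True
      have "0 < d" using d by simp
      then have "qform d (lanczos_vec d 0 x) \<noteq> 0" using x unfolding generic_set_def by blast
      then have "qform d (fst x) \<noteq> 0" by simp
      then show ?thesis using Lset_one_reachable[OF xV] d True by simp
    next
      case False
      then obtain A where A: "A \<in> Od d" "act d A x \<in> Lset d m" using Suc by auto
      let ?y = "act d A x"
      have "inv_num d (Suc m) ?y \<noteq> 0"
        by (rule generic_set_inv_nonzero(1)[OF generic_set_act[OF A(1) x]]) (use Suc in auto)
      then have "qform d (col_vec d m ?y) \<noteq> 0"
        using inv_num_Lset[OF _ _ A(2)] False Suc.prems by auto
      moreover have "1 \<le> m" "m + 2 \<le> d" using False Suc.prems by auto
      ultimately obtain B where B: "B \<in> Od d" "act d B ?y \<in> Lset d (Suc m)"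
        using Lset_Suc_reachable[OF _ _ A(2)] by blast
      then show ?thesis using mat_mul_Od[OF A(1) B(1)] by (auto simp: act_mat_mul)
    qed
  qed simp
  then show ?thesis using d by auto
qed

lemma Wd_off_diag: "W \<in> Wd d \<Longrightarrow> i \<noteq> j \<Longrightarrow> W i j = 0"
  and Wd_outside: "W \<in> Wd d \<Longrightarrow> i \<notin> {1..d} \<Longrightarrow> W i i = 0"
  unfolding Wd_def by auto

lemma Wd_square: assumes "W \<in> Wd d" "i \<in> {1..d}" shows "W i i * W i i = 1"
proof -
  have "W i i = 1 \<or> W i i = -1" using assms unfolding Wd_def by blast
  then show ?thesis by auto
qed

lemma mat_vec_Wd: assumes W: "W \<in> Wd d" shows "mat_vec d W u k = W k k * u k"
proof -
  have "mat_vec d W u k = (\<Sum>l=1..d. if l = k then W k k * u k else 0)"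
    unfolding mat_vec_def by (rule sum.cong[OF refl]) (simp add: Wd_off_diag[OF W])
  then show ?thesis using Wd_outside[OF W, of k] by simp
qed

lemma Wd_Od: assumes W: "W \<in> Wd d" shows "W \<in> Od d"
proof -
  have "(\<Sum>k=1..d. W i k * W j k) = (if i = j then 1 else 0)" if "i \<in> {1..d}" "j \<in> {1..d}" for i j
    using mat_vec_Wd[OF W, of "\<lambda>k. W j k" i] Wd_square[OF W] Wd_off_diag[OF W] that
    by (auto simp: mat_vec_def)
  then show ?thesis unfolding Od_def using W unfolding Wd_def by blast
qed

lemma act_Wd:
  assumes W: "W \<in> Wd d"
  shows "act d W y = ((\<lambda>k. W k k * fst y k), (\<lambda>k j. W k k * snd y k j * W j j))"
proof -
  have "snd (act d W y) k j = W k k * snd y k j * W j j" for k j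
  proof -
    have "snd (act d W y) k j = mat_vec d W (\<lambda>p. mat_vec d W (\<lambda>q. snd y p q) j) k"
      by (simp add: act_snd mat_vec_def sum_distrib_left mult_ac)
    then show ?thesis by (simp add: mat_vec_Wd[OF W] mult_ac)
  qed
  then show ?thesis by (simp add: prod_eq_iff fun_eq_iff act_fst mat_vec_Wd[OF W])
qed

lemma Wd_stabilizes_Lset: assumes W: "W \<in> Wd d" shows "act d W ` Lset d m = Lset d m"
proof -
  have into: "act d W y \<in> Lset d m" if y: "y \<in> Lset d m" for y
    using y act_Vsp[OF Wd_Od[OF W] Lset_Vsp[OF y]] unfolding Lset_iff act_Wd[OF W] by auto
  have "act d W (act d W y) = y" if y: "y \<in> Vsp d" for y
  proof -
    have a: "W k k * (W k k * fst y k) = fst y k" for k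
      using Wd_square[OF W, of k] Vsp_vec_zero[OF y, of k]
        by (cases "k \<in> {1..d}") (simp_all add: mult.assoc[symmetric])
    have b: "W k k * (W k k * snd y k j * W j j) * W j j = snd y k j" for k j
    proof (cases "k \<in> {1..d} \<and> j \<in> {1..d}")
      case True
      have "W k k * (W k k * snd y k j * W j j) * W j j = (W k k * W k k) * snd y k j * (W j j * W j j)"
        by (simp only: mult_ac)
      then show ?thesis using True Wd_square[OF W] by simp
    qed (use Vsp_mat_zero[OF y, of k j] in auto)
    show ?thesis unfolding act_Wd[OF W] fst_conv snd_conv a b by simp
  qed
  then have "y \<in> act d W ` Lset d m" if "y \<in> Lset d m" for y
    using into[OF that] Lset_Vsp[OF that] by (metis image_eqI)
  then show ?thesis using into by blast
qed

lemma Od_col_to_row: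
  assumes A: "A \<in> Od d" and l: "l \<in> {1..d}" and col: "\<And>k. k \<noteq> l \<Longrightarrow> A k l = 0"
  shows "A l l * A l l = 1" "\<And>k. k \<noteq> l \<Longrightarrow> A l k = 0"
proof -
  have s: "(\<Sum>p=1..d. A p l * A p k) = A l l * A l k" for k
    by (rule sum_eq_single_term) (use l col in auto)
  show "A l l * A l l = 1" using Od_cols[OF A l l] s[of l] by simp
  then have "A l l \<noteq> 0" by auto
  then show "A l k = 0" if "k \<noteq> l" for k
    using Od_cols[OF A l, of k] s[of k] that Od_zero[OF A, of l k] by (cases "k \<in> {1..d}") auto
qed

text \<open>The stabilizer is computed on the test points (e_d, 0), which pins the last column, and
  (0, E_(j-1,j) - E_(j,j-1)), which pin column j - 1 once row j is known.\<close>

lemma stabilizer_last_col: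
  assumes d: "2 \<le> d" and A: "A \<in> Od d" and st: "\<And>y. y \<in> Lset d (d - 1) \<Longrightarrow> act d A y \<in> Lset d (d - 1)"
    and k: "k \<noteq> d"
  shows "A k d = 0"
proof (cases "k \<in> {1..d}")
  case True
  define y :: pt where "y = ((\<lambda>i. if i = d then 1 else 0), (\<lambda>i j. 0))"
  have "y \<in> Lset d (d - 1)" using d by (auto simp: Lset_iff Vsp_iff y_def)
  then have "fst (act d A y) k = 0" by (rule Lset_vec_zero[OF st]) (use d k True in auto)
  moreover have "fst (act d A y) k = A k d"
    using d by (simp add: act_fst mat_vec_def y_def if_distrib[of "\<lambda>t. _ * t"] cong: if_cong)
  ultimately show ?thesis by simp
qed (use Od_zero[OF A] in blast)

lemma stabilizer_col_step:
  assumes A: "A \<in> Od d" and st: "\<And>y. y \<in> Lset d (d - 1) \<Longrightarrow> act d A y \<in> Lset d (d - 1)"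
    and j: "j \<le> d" and k: "1 \<le> k" "k + 2 \<le> j" and row: "\<And>q. q \<noteq> j \<Longrightarrow> A j q = 0"
  shows "A k (j - 1) = 0"
proof -
  have jd: "j \<in> {1..d}" using j k by auto
  have "A j j * A j j = 1"
    using Od_rows[OF A jd jd] sum_eq_single_term[of "{1..d}" j "\<lambda>q. A j q * A j q"] jd row by simp
  define y :: pt where
    "y = ((\<lambda>i. 0), (\<lambda>p q. if p = j - 1 \<and> q = j then 1 else if p = j \<and> q = j - 1 then -1 else 0))"
  have "y \<in> Lset d (d - 1)" using j k by (auto simp: Lset_iff Vsp_iff y_def)
  then have "snd (act d A y) k j = 0" by (rule Lset_col_zero[OF st]) (use j k in auto)
  moreover have "snd (act d A y) k j = mat_vec d A (\<lambda>p. mat_vec d A (\<lambda>q. snd y p q) j) k"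
    by (simp add: act_snd mat_vec_def sum_distrib_left mult_ac)
  moreover have "mat_vec d A (\<lambda>q. snd y p q) j = snd y p j * A j j" for p
    unfolding mat_vec_def by (subst sum_eq_single_term[of _ j]) (use jd row in \<open>auto simp: mult.commute\<close>)
  moreover have "mat_vec d A (\<lambda>p. snd y p j * A j j) k = A k (j - 1) * A j j"
    unfolding mat_vec_def by (subst sum_eq_single_term[of _ "j - 1"]) (use jd k in \<open>auto simp: y_def\<close>)
  ultimately show ?thesis using \<open>A j j * A j j = 1\<close> by auto
qed

lemma stabilizer_Lset_Wd:
  assumes d: "2 \<le> d" and A: "A \<in> Od d" and st: "\<And>y. y \<in> Lset d (d - 1) \<Longrightarrow> act d A y \<in> Lset d (d - 1)"
  shows "A \<in> Wd d"
proof -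
  have diag: "(\<forall>k. k \<noteq> l \<longrightarrow> A k l = 0 \<and> A l k = 0) \<and> A l l * A l l = 1" if "l \<in> {1..d}" for l
    using that
  proof (induction "d - l" arbitrary: l rule: less_induct)
    case less
    have col: "A k l = 0" if k: "k \<noteq> l" for k
    proof (cases "l = d")
      case True
      then show ?thesis using stabilizer_last_col[OF d A st] k by blast
    next
      case False
      show ?thesis
      proof (cases "k \<in> {1..d}")
        case True
        show ?thesis
        proof (cases "l < k")
          case True
          then show ?thesis using less.hyps[of k] \<open>k \<in> {1..d}\<close> by auto
        next
          case False
          then show ?thesis
            using stabilizer_col_step[OF A st, of "l + 1" k] less.hyps[of "l + 1"] less.prems k
              \<open>l \<noteq> d\<close> \<open>k \<in> {1..d}\<close>
            by auto
        qed
      qed (use Od_zero[OF A] in blast)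
    qed
    show ?case using Od_col_to_row[OF A less.prems col] col by blast
  qed
  have "A i j = 0" if "i \<noteq> j" for i j
    using diag[of i] Od_zero[OF A, of i j] that by (cases "i \<in> {1..d}") auto
  moreover have "A i i = 1 \<or> A i i = -1" if "i \<in> {1..d}" for i
    using diag[OF that] power2_eq_1_iff[of "A i i"] by (simp add: power2_eq_square)
  ultimately show ?thesis unfolding Wd_def using Od_zero[OF A] by blast
qed

lemma stabilizer_Lset:
  assumes d: "2 \<le> d" shows "{A \<in> Od d. act d A ` Lset d (d - 1) = Lset d (d - 1)} = Wd d"
proof (intro equalityI subsetI)
  fix A assume "A \<in> {A \<in> Od d. act d A ` Lset d (d - 1) = Lset d (d - 1)}"
  then have A: "A \<in> Od d" "act d A ` Lset d (d - 1) = Lset d (d - 1)" by auto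
  then show "A \<in> Wd d" by (intro stabilizer_Lset_Wd[OF d A(1)]) blast
qed (use Wd_Od Wd_stabilizes_Lset in blast)

lemma orbit_meets_Lset:
  "2 \<le> d \<Longrightarrow> x \<in> generic_set d \<Longrightarrow> orbit d x \<inter> Lset d (d - 1) \<noteq> {}"
  using generic_set_reaches_Lset unfolding orbit_def by blast

lemma generic_set_section:
  assumes "2 \<le> d"
  shows "generic_set d \<noteq> {}" and "zariski_open d (generic_set d)"
    and "\<forall>A\<in>Od d. act d A ` generic_set d \<subseteq> generic_set d"
    and "\<forall>x\<in>generic_set d. orbit d x \<subseteq> generic_set d \<longrightarrow> orbit d x \<inter> Lset d (d - 1) \<noteq> {}"
  using base_point_generic[OF assms] zariski_open_generic_set generic_set_act orbit_meets_Lset[OF assms]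
  by blast+

lemma relative_section_Lset:
  assumes d: "2 \<le> d" shows "relative_section d (Wd d) (Lset d (d - 1))"
  unfolding relative_section_def
proof (intro conjI exI[of _ "generic_set d"])
  show "generic_set d \<subseteq> Vsp d" unfolding generic_set_def by blast
qed (use generic_set_section[OF d] stabilizer_Lset[OF d] in simp_all)

lemma invariant_restriction:
  assumes d: "2 \<le> d" and i: "2 \<le> i" "i \<le> d"
  shows "Lset d (i - 1) \<inter> rdom d (invariant d i) \<noteq> {}
    \<and> (\<forall>x\<in>Lset d (i - 1) \<inter> rdom d (invariant d i).
         reval d (invariant d i) x = (\<Sum>k=1..d-i+1. (snd x k (d - i + 2))\<^sup>2))"
proof -
  obtain m where m: "i = Suc m" "1 \<le> m" "m + 1 \<le> d" using i by (cases i) auto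
  moreover have "d - i + 1 = d - m" "d - i + 2 = d - m + 1" using i m by auto
  ultimately show ?thesis
    using base_point_Lset_rdom[OF d m(2,3)] reval_invariant_Lset[OF d m(2,3)]
      by (auto simp: qform_col_vec)
qed

theorem proposition3p6:
  fixes d :: nat
  assumes "2 \<le> d"
  shows "relative_section d (Wd d) (Lset d (d - 1))
    \<and> (\<exists>F :: nat \<Rightarrow> (pt \<Rightarrow> complex) \<times> (pt \<Rightarrow> complex).
        (\<forall>k\<in>{1..d}. ratfun d (F k) \<and> rat_invariant d (F k))
      \<and> (let U = {x \<in> Vsp d. (\<forall>k\<in>{1..d}. x \<in> rdom d (F k))
                     \<and> (\<Prod>k=1..d. reval d (F k) x) \<noteq> 0}
         in U \<noteq> {} \<and> zariski_open d U \<and> (\<forall>A\<in>Od d. act d A ` U \<subseteq> U)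
            \<and> (\<forall>x\<in>U. orbit d x \<subseteq> U \<longrightarrow> orbit d x \<inter> Lset d (d - 1) \<noteq> {}))
      \<and> (\<forall>x\<in>Vsp d. x \<in> rdom d (F 1) \<and> reval d (F 1) x = (\<Sum>i=1..d. (fst x i)\<^sup>2))
      \<and> (\<forall>i\<in>{2..<d}. Lset d (i - 1) \<inter> rdom d (F i) \<noteq> {}
           \<and> (\<forall>x\<in>Lset d (i - 1) \<inter> rdom d (F i).
                reval d (F i) x = (\<Sum>k=1..d-i+1. (snd x k (d - i + 2))\<^sup>2)))
      \<and> Lset d (d - 1) \<inter> rdom d (F d) \<noteq> {}
      \<and> (\<forall>x\<in>Lset d (d - 1) \<inter> rdom d (F d). reval d (F d) x = (snd x 1 2)\<^sup>2))"
proof -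
  have d: "2 \<le> d" by (rule assms)
  have invariants: "\<forall>k\<in>{1..d}. ratfun d (invariant d k) \<and> rat_invariant d (invariant d k)"
    using ratfun_invariant[OF d] rat_invariant_invariant by blast
  have first: "\<forall>x\<in>Vsp d. x \<in> rdom d (invariant d 1) \<and> reval d (invariant d 1) x = (\<Sum>i=1..d. (fst x i)\<^sup>2)"
    using reval_invariant_one[OF d] by blast
  have middle: "\<forall>i\<in>{2..<d}. Lset d (i - 1) \<inter> rdom d (invariant d i) \<noteq> {}
      \<and> (\<forall>x\<in>Lset d (i - 1) \<inter> rdom d (invariant d i).
           reval d (invariant d i) x = (\<Sum>k=1..d-i+1. (snd x k (d - i + 2))\<^sup>2))"
    using invariant_restriction[OF d] by simp
  have last: "Lset d (d - 1) \<inter> rdom d (invariant d d) \<noteq> {}"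
    "\<forall>x\<in>Lset d (d - 1) \<inter> rdom d (invariant d d). reval d (invariant d d) x = (snd x 1 2)\<^sup>2"
    using invariant_restriction[OF d d order.refl] by (simp_all add: numeral_2_eq_2)
  show ?thesis
    unfolding Let_def
    by (intro conjI exI[of _ "invariant d"]; (simp only: generic_set_eq[OF d])?;
        fact relative_section_Lset[OF d] invariants generic_set_section[OF d] first middle last)
qed

end
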